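(* Let $r\le n$, let $T'\in\mathbb{R}^n\otimes\mathbb{R}^n\otimes\mathbb{R}^n$ be a symmetric tensor with a decomposition $T'=\sum_{i=1}^r(u'_i)^{\otimes3}$, $u'_i\in\mathbb{R}^n$, and let $U'\in\mathbb{R}^{r\times n}$ be the matrix with rows $u'_i$. Let $\sigma>0$, let $U\in\mathbb{R}^{r\times n}$ have independent entries $U_{ij}\sim\mathcal N(U'_{ij},\sigma^2)$, and let $T=\sum_{i=1}^ru_i^{\otimes3}$ where $u_1,\dots,u_r$ are the rows of $U$. Then $$\kappa(T)\le 98\sigma^2n^3+2n\|U'\|_F^2+\frac{e^2n^4}{\sigma^2}$$ with probability at least $1-\big(\frac1{\sqrt n}+e^{-2n/\pi^2}\big)$.
   Context: $\kappa(T)=\|U\|_F^2+\|U^\dagger\|_F^2$, where $U$ is the matrix whose rows are the vectors $u_i$ of the decomposition $T=\sum u_i^{\otimes3}$ and $U^\dagger$ is its Moore–Penrose pseudoinverse. *)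

theory Defs
  imports "HOL-Probability.Probability"
begin

text \<open>Matrices in R^(r x n) are represented as real^'n^'r (rows indexed by 'r).\<close>

definition frob_sq :: "real^'n^'m \<Rightarrow> real" where
  "frob_sq A = (\<Sum>i\<in>UNIV. \<Sum>j\<in>UNIV. (A $ i $ j)\<^sup>2)"

definition pinv :: "real^'n^'m \<Rightarrow> real^'m^'n" where
  "pinv A = (THE X. A ** X ** A = A \<and> X ** A ** X = X \<and>
                    transpose (A ** X) = A ** X \<and> transpose (X ** A) = X ** A)"

definition tensor_of_rows :: "real^'n^'r \<Rightarrow> 'n \<Rightarrow> 'n \<Rightarrow> 'n \<Rightarrow> real" where
  "tensor_of_rows U a b c = (\<Sum>i\<in>UNIV. U $ i $ a * U $ i $ b * U $ i $ c)"

definition kappa :: "real^'n^'r \<Rightarrow> real" where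
  "kappa U = frob_sq U + frob_sq (pinv U)"

definition gauss_matrix_measure :: "real^'n^'r \<Rightarrow> real \<Rightarrow> ('r \<times> 'n \<Rightarrow> real) measure" where
  "gauss_matrix_measure U' \<sigma> =
     PiM UNIV (\<lambda>(i, j). density lborel (normal_density (U' $ i $ j) \<sigma>))"

definition mat_of_entries :: "('r \<times> 'n \<Rightarrow> real) \<Rightarrow> real^'n^'r" where
  "mat_of_entries X = (\<chi> i j. X (i, j))"

end

theory Submission
  imports Defs
begin

text \<open>
  Write \<open>U = U' + G\<close> with \<open>G\<close> an \<open>r \<times> n\<close> matrix of independent centred Gaussians of
  variance \<open>\<sigma>\<^sup>2\<close>. Since \<open>\<parallel>G\<parallel>\<^sub>F\<^sup>2\<close> has mean \<open>r n \<sigma>\<^sup>2\<close>, Markov's inequality gives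
  \<open>\<parallel>G\<parallel>\<^sub>F\<^sup>2 \<le> 49 \<sigma>\<^sup>2 n\<^sup>3\<close> except with probability \<open>1/(49 n)\<close>, and then
  \<open>\<parallel>U\<parallel>\<^sub>F\<^sup>2 \<le> 2 \<parallel>U'\<parallel>\<^sub>F\<^sup>2 + 2 \<parallel>G\<parallel>\<^sub>F\<^sup>2\<close>.

  For the pseudoinverse, suppose every row \<open>u\<^sub>i\<close> has a dual vector \<open>w\<^sub>i\<close>, orthogonal to the
  other rows with \<open>\<langle>u\<^sub>i, w\<^sub>i\<rangle> = 1\<close>, of norm at most \<open>1/t\<close>. Then the \<open>w\<^sub>i\<close> are the columns
  of a right inverse \<open>W\<close> of \<open>U\<close>, and \<open>\<parallel>U\<^sup>+\<parallel>\<^sub>F \<le> \<parallel>W\<parallel>\<^sub>F\<close> because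
  \<open>U\<^sup>+ = (U\<^sup>+U) W\<close> with \<open>U\<^sup>+U\<close> an orthogonal projection. Conditionally on the other rows,
  choose a unit vector \<open>v\<close> orthogonal to them (possible as \<open>r \<le> n\<close>): \<open>\<langle>u\<^sub>i, v\<rangle>\<close> is Gaussian
  with variance \<open>\<sigma>\<^sup>2\<close>, so \<open>|\<langle>u\<^sub>i, v\<rangle>| < t\<close> has probability at most \<open>2t/(\<sigma>\<surd>(2\<pi>))\<close>, and
  otherwise \<open>v/\<langle>u\<^sub>i, v\<rangle>\<close> is a dual vector of norm at most \<open>1/t\<close>. A union bound with
  \<open>t = \<sigma>/(e n \<surd>n)\<close> bounds the failure probability by \<open>1/\<surd>n\<close>.
\<close>

section \<open>The Moore-Penrose pseudoinverse\<close>

definition is_pinv :: "real^'n^'m \<Rightarrow> real^'m^'n \<Rightarrow> bool" where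
  "is_pinv A X \<longleftrightarrow> A ** X ** A = A \<and> X ** A ** X = X \<and>
                    transpose (A ** X) = A ** X \<and> transpose (X ** A) = X ** A"

lemma is_pinv_transpose:
  assumes "is_pinv A X"
  shows "is_pinv (transpose A) (transpose X)"
proof -
  have X: "A ** X ** A = A" "X ** A ** X = X" "transpose (A ** X) = A ** X" "transpose (X ** A) = X ** A"
    using assms by (simp_all add: is_pinv_def)
  have "transpose A ** transpose X ** transpose A = transpose (A ** X ** A)"
    "transpose X ** transpose A ** transpose X = transpose (X ** A ** X)"
    by (simp_all add: matrix_transpose_mul matrix_mul_assoc)
  then show ?thesis
    unfolding is_pinv_def by (simp add: X flip: matrix_transpose_mul)
qed

lemma is_pinv_left_mult_eq:
  assumes X: "is_pinv A X" and Y: "is_pinv A Y"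
  shows "A ** X = A ** Y"
proof -
  have "A ** X = transpose (A ** X)"
    using X by (simp add: is_pinv_def)
  also have "\<dots> = transpose (A ** Y ** A ** X)"
    using Y by (simp add: is_pinv_def)
  also have "\<dots> = transpose (A ** X) ** transpose (A ** Y)"
    by (simp add: matrix_transpose_mul matrix_mul_assoc)
  also have "\<dots> = A ** X ** (A ** Y)"
    using X Y by (simp add: is_pinv_def)
  also have "\<dots> = A ** Y"
    using X by (simp add: is_pinv_def matrix_mul_assoc)
  finally show ?thesis .
qed

lemma is_pinv_unique:
  assumes X: "is_pinv A X" and Y: "is_pinv A Y"
  shows "X = Y"
proof -
  have AX: "A ** X = A ** Y"
    using X Y by (rule is_pinv_left_mult_eq)
  have "transpose A ** transpose X = transpose A ** transpose Y"
    using X Y by (intro is_pinv_left_mult_eq is_pinv_transpose)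
  then have XA: "X ** A = Y ** A"
    by (metis matrix_transpose_mul transpose_transpose)
  have "X = X ** A ** X"
    using X by (simp add: is_pinv_def)
  also have "\<dots> = X ** A ** Y"
    by (simp add: AX flip: matrix_mul_assoc)
  also have "\<dots> = Y"
    using Y by (simp add: XA is_pinv_def)
  finally show ?thesis .
qed

lemma orthogonal_projection_exists:
  fixes S :: "'a::euclidean_space set"
  assumes S: "subspace S"
  obtains P where "linear P" "\<And>x. P x \<in> S" "\<And>x. x \<in> S \<Longrightarrow> P x = x"
    "\<And>x s. s \<in> S \<Longrightarrow> (x - P x) \<bullet> s = 0" "\<And>x y. P x \<bullet> y = x \<bullet> P y"
proof -
  define proj where "proj x y \<longleftrightarrow> y \<in> S \<and> (\<forall>s\<in>S. (x - y) \<bullet> s = 0)" for x y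
  define P where "P x = (SOME y. proj x y)" for x
  have "\<exists>y. proj x y" for x
  proof -
    obtain y z where "y \<in> span S" "\<And>w. w \<in> span S \<Longrightarrow> orthogonal z w" "x = y + z"
      using orthogonal_subspace_decomp_exists by blast
    then show ?thesis
      unfolding proj_def using S span_eq_iff by (metis add_diff_cancel_left' orthogonal_def span_superset)
  qed
  then have P: "proj x (P x)" for x
    unfolding P_def by (rule someI_ex)
  have proj_unique: "y = P x" if "proj x y" for x y
  proof -
    have "y - P x \<in> S"
      using that P S unfolding proj_def by (simp add: subspace_diff)
    then have "(x - P x) \<bullet> (y - P x) = 0" "(x - y) \<bullet> (y - P x) = 0"
      using that P unfolding proj_def by auto
    then have "(y - P x) \<bullet> (y - P x) = 0"
      by (simp add: algebra_simps inner_diff_left)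
    then show ?thesis by simp
  qed
  have in_S: "P x \<in> S" and orth: "s \<in> S \<Longrightarrow> (x - P x) \<bullet> s = 0" for x s
    using P unfolding proj_def by auto
  have lin: "linear P"
  proof (rule linearI)
    show "P (x + y) = P x + P y" for x y
      using P[of x] P[of y] S unfolding proj_def
      by (intro proj_unique[symmetric]) (auto simp: proj_def subspace_add algebra_simps inner_diff_left inner_add_left)
    show "P (c *\<^sub>R x) = c *\<^sub>R P x" for c x
      using P[of x] S unfolding proj_def
      by (intro proj_unique[symmetric]) (auto simp: proj_def subspace_scale algebra_simps inner_diff_left)
  qed
  have fixes_S: "P x = x" if "x \<in> S" for x
    using that by (intro proj_unique[symmetric]) (simp add: proj_def)
  have self_adjoint: "P x \<bullet> y = x \<bullet> P y" for x y
    using orth[OF in_S, of x y] orth[OF in_S, of y x]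
    by (simp add: algebra_simps inner_diff_left inner_commute)
  show ?thesis
    by (rule that[OF lin in_S fixes_S orth self_adjoint])
qed

lemma symmetric_matrixI:
  fixes M :: "real^'n^'n"
  assumes "\<And>x y. (M *v x) \<bullet> y = x \<bullet> (M *v y)"
  shows "transpose M = M"
proof -
  have "M $ j $ i = M $ i $ j" for i j
    using assms[of "axis i 1" "axis j 1"]
    by (simp add: inner_axis inner_axis' matrix_vector_mul_component)
  then show ?thesis by (simp add: vec_eq_iff transpose_def)
qed

lemma row_space_kernel_trivial:
  fixes A :: "real^'n^'m"
  assumes "z \<in> span (range (\<lambda>i. A $ i))" and "A *v z = 0"
  shows "z = 0"
proof -
  have "orthogonal z s" if "s \<in> span (range (\<lambda>i. A $ i))" for s
    using that
  proof (rule orthogonal_to_span)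
    fix y assume "y \<in> range (\<lambda>i. A $ i)"
    then show "orthogonal z y"
      using \<open>A *v z = 0\<close>
      by (auto simp: orthogonal_def inner_commute vec_eq_iff matrix_vector_mul_component)
  qed
  then show ?thesis
    using assms(1) by (meson orthogonal_self)
qed

text \<open>\<open>X\<close> sends \<open>y\<close> to the preimage, inside the row space of \<open>A\<close>, of the orthogonal
  projection of \<open>y\<close> onto the column space of \<open>A\<close>.\<close>

lemma is_pinv_exists: "\<exists>X. is_pinv (A::real^'n^'m) X"
proof -
  define R where "R = span (range (\<lambda>i. A $ i))"
  have "subspace R"
    unfolding R_def by (rule subspace_span)
  then obtain PR where PR: "linear PR" "\<And>x. PR x \<in> R" "\<And>x. x \<in> R \<Longrightarrow> PR x = x"
    "\<And>x s. s \<in> R \<Longrightarrow> (x - PR x) \<bullet> s = 0" "\<And>x y. PR x \<bullet> y = x \<bullet> PR y"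
    by (rule orthogonal_projection_exists) blast
  have "subspace (range ((*v) A))"
    by (intro linear_subspace_image matrix_vector_mul_linear subspace_UNIV)
  then obtain PC where PC: "linear PC" "\<And>x. PC x \<in> range ((*v) A)" "\<And>x. x \<in> range ((*v) A) \<Longrightarrow> PC x = x"
    "\<And>x s. s \<in> range ((*v) A) \<Longrightarrow> (x - PC x) \<bullet> s = 0" "\<And>x y. PC x \<bullet> y = x \<bullet> PC y"
    by (rule orthogonal_projection_exists) blast
  have A_PR: "A *v PR x = A *v x" for x
  proof -
    have "A $ i \<bullet> (x - PR x) = 0" for i
      using PR(4)[of "A $ i" x] by (simp add: R_def span_base inner_commute)
    then have "A *v (x - PR x) = 0"
      by (simp add: vec_eq_iff matrix_vector_mul_component)
    then show ?thesis by (simp add: matrix_vector_mult_diff_distrib)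
  qed
  have "inj_on ((*v) A) R"
  proof (rule inj_onI)
    fix x y assume "x \<in> R" "y \<in> R" "A *v x = A *v y"
    then have "x - y = 0"
      using row_space_kernel_trivial[of "x - y" A] by (simp add: R_def span_diff matrix_vector_mult_diff_distrib)
    then show "x = y" by simp
  qed
  then obtain g where g: "linear g" "range g \<subseteq> R" "\<And>z. z \<in> R \<Longrightarrow> g (A *v z) = z"
    using real_vector.linear_inj_on_left_inverse[OF matrix_vector_mul_linear, of A "range (\<lambda>i. A $ i)"]
    unfolding R_def by blast
  have g_R: "g y \<in> R" for y
    using g(2) by blast
  have g_A: "g (A *v x) = PR x" for x
    using g(3)[OF PR(2), of x] by (simp add: A_PR)
  have A_g_PC: "A *v g (PC y) = PC y" for y
    using PC(2)[of y] by (auto simp: g_A A_PR)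
  define X where "X = matrix (g \<circ> PC)"
  have X: "X *v y = g (PC y)" for y
    unfolding X_def using linear_compose[OF PC(1) g(1)] by (simp add: matrix_works)
  have A_X: "A *v (X *v y) = PC y" for y
    by (simp add: X A_g_PC)
  have X_R: "X *v y \<in> R" for y
    by (simp add: X g_R)
  have X_A: "X *v (A *v x) = PR x" for x
    using PC(3)[of "A *v x"] by (simp add: X g_A)
  have "is_pinv A X"
    unfolding is_pinv_def
  proof (intro conjI)
    show "A ** X ** A = A"
      unfolding matrix_eq by (simp add: X_A A_PR flip: matrix_vector_mul_assoc)
    show "X ** A ** X = X"
      unfolding matrix_eq by (simp add: X_A PR(3) X_R flip: matrix_vector_mul_assoc)
    show "transpose (A ** X) = A ** X"
      by (rule symmetric_matrixI) (simp add: A_X PC(5) flip: matrix_vector_mul_assoc)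
    show "transpose (X ** A) = X ** A"
      by (rule symmetric_matrixI) (simp add: X_A PR(5) flip: matrix_vector_mul_assoc)
  qed
  then show ?thesis ..
qed

lemma is_pinv_pinv: "is_pinv A (pinv A)"
proof -
  have "\<exists>!X. is_pinv A X"
    using is_pinv_exists is_pinv_unique by (intro ex_ex1I) auto
  then show ?thesis
    unfolding pinv_def is_pinv_def[symmetric] by (rule theI')
qed

lemma pinv_eqI: "is_pinv A X \<Longrightarrow> pinv A = X"
  using is_pinv_pinv is_pinv_unique by blast

section \<open>Frobenius norm, right inverses and dual vectors\<close>

lemma frob_sq_eq_norm_sq: "frob_sq (M::real^'n^'m) = (norm M)\<^sup>2"
  unfolding frob_sq_def power2_norm_eq_inner inner_vec_def by (simp add: power2_eq_square)

lemma frob_sq_nonneg: "frob_sq M \<ge> 0"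
  by (simp add: frob_sq_eq_norm_sq)

lemma frob_sq_add_le: "frob_sq (A + B) \<le> 2 * frob_sq A + 2 * frob_sq B"
proof -
  have "(norm (A + B))\<^sup>2 \<le> (norm A + norm B)\<^sup>2"
    by (simp add: norm_triangle_ineq power_mono)
  also have "\<dots> \<le> 2 * (norm A)\<^sup>2 + 2 * (norm B)\<^sup>2"
    using sum_squares_bound[of "norm A" "norm B"] by (simp add: power2_sum)
  finally show ?thesis
    by (simp add: frob_sq_eq_norm_sq)
qed

lemma frob_sq_eq_sum_columns: "frob_sq (M::real^'n^'m) = (\<Sum>j\<in>UNIV. (norm (column j M))\<^sup>2)"
  unfolding frob_sq_def power2_norm_eq_inner column_def inner_vec_def
  by (simp add: power2_eq_square sum.swap[of _ "UNIV::'m set"])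

lemma norm_symmetric_idempotent_mult_le:
  fixes Q :: "real^'n^'n"
  assumes "transpose Q = Q" and "Q ** Q = Q"
  shows "norm (Q *v w) \<le> norm w"
proof -
  have "(Q *v w) \<bullet> (Q *v w) = (transpose Q *v w) \<bullet> (Q *v w)"
    using assms(1) by simp
  also have "\<dots> = w \<bullet> (Q *v (Q *v w))"
    by (simp add: dot_lmul_matrix)
  also have "\<dots> = w \<bullet> (Q *v w)"
    using assms by (simp add: matrix_vector_mul_assoc)
  finally have "(Q *v w) \<bullet> (w - Q *v w) = 0"
    by (simp add: inner_diff_right inner_commute)
  then have "(norm w)\<^sup>2 = (norm (Q *v w))\<^sup>2 + (norm (w - Q *v w))\<^sup>2"
    using norm_add_Pythagorean[of "Q *v w" "w - Q *v w"] by (simp add: orthogonal_def)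
  then have "(norm (Q *v w))\<^sup>2 \<le> (norm w)\<^sup>2"
    by simp
  then show ?thesis
    by (rule power2_le_imp_le) simp
qed

lemma frob_sq_pinv_le_right_inverse:
  fixes A :: "real^'n^'m" and W :: "real^'m^'n"
  assumes "A ** W = mat 1"
  shows "frob_sq (pinv A) \<le> frob_sq W"
proof -
  define Q where "Q = pinv A ** A"
  have P: "A ** pinv A ** A = A" "pinv A ** A ** pinv A = pinv A" "transpose Q = Q"
    using is_pinv_pinv[of A] unfolding is_pinv_def Q_def by auto
  have "Q ** Q = Q"
    unfolding Q_def using P(2) by (metis matrix_mul_assoc)
  have "pinv A = Q ** W"
    unfolding Q_def by (metis assms P(2) matrix_mul_assoc matrix_mul_rid)
  then have "column j (pinv A) = Q *v column j W" for j
    by (simp add: vec_eq_iff column_def matrix_matrix_mult_def matrix_vector_mult_def)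
  then show ?thesis
    unfolding frob_sq_eq_sum_columns
    by (auto intro!: sum_mono power_mono norm_symmetric_idempotent_mult_le P(3) \<open>Q ** Q = Q\<close>)
qed

text \<open>For \<open>t > 0\<close>, such a \<open>w\<close> exists iff row \<open>i\<close> of \<open>A\<close> has distance at least \<open>t\<close>
  from the span of the other rows.\<close>

definition has_short_dual_vector :: "real^'n^'r \<Rightarrow> 'r \<Rightarrow> real \<Rightarrow> bool" where
  "has_short_dual_vector A i t \<longleftrightarrow>
     (\<exists>w. (\<forall>k. k \<noteq> i \<longrightarrow> A $ k \<bullet> w = 0) \<and> A $ i \<bullet> w = 1 \<and> norm w \<le> 1 / t)"

lemma right_inverse_from_short_dual_vectors:
  fixes A :: "real^'n^'r"
  assumes "\<And>i. has_short_dual_vector A i t"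
  obtains W where "A ** W = mat 1" and "frob_sq W \<le> CARD('r) / t\<^sup>2"
proof -
  obtain w where w: "\<And>i k. k \<noteq> i \<Longrightarrow> A $ k \<bullet> w i = 0" "\<And>i. A $ i \<bullet> w i = 1" "\<And>i. norm (w i) \<le> 1 / t"
    using assms unfolding has_short_dual_vector_def by metis
  define W :: "real^'r^'n" where "W = (\<chi> a i. w i $ a)"
  have "(A ** W) $ k $ i = A $ k \<bullet> w i" for k i
    by (simp add: matrix_matrix_mult_def W_def inner_vec_def)
  then have "A ** W = mat 1"
    using w(1,2) by (simp add: vec_eq_iff mat_def)
  moreover have "frob_sq W \<le> CARD('r) / t\<^sup>2"
  proof -
    have "frob_sq W = (\<Sum>i\<in>UNIV. (norm (w i))\<^sup>2)"
      unfolding frob_sq_eq_sum_columns by (simp add: column_def W_def)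
    also have "\<dots> \<le> (\<Sum>i\<in>(UNIV::'r set). (1 / t)\<^sup>2)"
      using w(3) by (intro sum_mono power_mono) auto
    finally show ?thesis
      by (simp add: power_divide)
  qed
  ultimately show ?thesis
    by (rule that)
qed

lemma has_short_dual_vectorI:
  assumes "norm v = 1" and "\<And>k. k \<noteq> i \<Longrightarrow> A $ k \<bullet> v = 0"
    and "0 < t" and "t \<le> \<bar>A $ i \<bullet> v\<bar>"
  shows "has_short_dual_vector A i t"
  unfolding has_short_dual_vector_def
proof (intro exI conjI allI impI)
  define a where "a = A $ i \<bullet> v"
  have "a \<noteq> 0"
    using assms(3,4) by (auto simp: a_def)
  show "A $ k \<bullet> (v /\<^sub>R a) = 0" if "k \<noteq> i" for k
    using assms(2)[OF that] by simp
  show "A $ i \<bullet> (v /\<^sub>R a) = 1"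
    using \<open>a \<noteq> 0\<close> by (simp add: a_def)
  show "norm (v /\<^sub>R a) \<le> 1 / t"
    using assms by (simp add: a_def divide_inverse frac_le)
qed

lemma kappa_le_if_short_dual_vectors:
  fixes U U' :: "real^'n^'r"
  assumes "frob_sq (U - U') \<le> D" and "\<And>i. has_short_dual_vector U i t"
  shows "kappa U \<le> 2 * D + 2 * frob_sq U' + CARD('r) / t\<^sup>2"
proof -
  have "frob_sq U \<le> 2 * frob_sq U' + 2 * frob_sq (U - U')"
    using frob_sq_add_le[of U' "U - U'"] by simp
  moreover obtain W where "U ** W = mat 1" "frob_sq W \<le> CARD('r) / t\<^sup>2"
    using right_inverse_from_short_dual_vectors assms(2) by blast
  then have "frob_sq (pinv U) \<le> CARD('r) / t\<^sup>2"
    using frob_sq_pinv_le_right_inverse by fastforce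
  ultimately show ?thesis
    using assms(1) unfolding kappa_def by linarith
qed

lemma continuous_on_matrix_mult[continuous_intros]:
  fixes f :: "'x::topological_space \<Rightarrow> real^'n^'m" and g :: "'x \<Rightarrow> real^'k^'n"
  assumes "continuous_on S f" "continuous_on S g"
  shows "continuous_on S (\<lambda>x. f x ** g x)"
  unfolding matrix_matrix_mult_def using assms by (intro continuous_intros)

lemma continuous_on_transpose[continuous_intros]:
  fixes f :: "'x::topological_space \<Rightarrow> real^'n^'m"
  assumes "continuous_on S f"
  shows "continuous_on S (\<lambda>x. transpose (f x))"
  unfolding transpose_def using assms by (intro continuous_intros)

lemma closed_frob_sq_dist_le: "closed {A::real^'n^'m. frob_sq (A - B) \<le> c}"
  unfolding frob_sq_eq_norm_sq by (intro closed_Collect_le continuous_intros)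

text \<open>\<open>pinv\<close> is not continuous; closedness comes from projecting the closed set of
  solutions of the Penrose equations along a compact factor.\<close>

lemma closed_kappa_le: "closed {A::real^'n^'r. kappa A \<le> c}"
proof -
  define S where "S = {Y::real^'r^'n. frob_sq Y \<le> c}"
  define T :: "((real^'r^'n) \<times> (real^'n^'r)) set"
    where "T = {(Y, A). is_pinv A Y \<and> frob_sq A + frob_sq Y \<le> c}"
  have "compact S"
    unfolding S_def frob_sq_eq_norm_sq compact_eq_bounded_closed bounded_iff
    by (auto intro!: exI[of _ "sqrt c"] real_le_rsqrt closed_Collect_le continuous_intros)
  moreover have "closed T"
    unfolding T_def is_pinv_def frob_sq_eq_norm_sq case_prod_beta
    by (intro closed_Collect_conj closed_Collect_eq closed_Collect_le continuous_intros)
  moreover have "{A. kappa A \<le> c} = {A. \<exists>Y. Y \<in> S \<and> (Y, A) \<in> T}"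
  proof (intro set_eqI iffI)
    fix A :: "real^'n^'r" assume "A \<in> {A. kappa A \<le> c}"
    then show "A \<in> {A. \<exists>Y. Y \<in> S \<and> (Y, A) \<in> T}"
      using is_pinv_pinv[of A] frob_sq_nonneg[of A] unfolding S_def T_def kappa_def
      by (intro CollectI exI[of _ "pinv A"]) auto
  next
    fix A :: "real^'n^'r" assume "A \<in> {A. \<exists>Y. Y \<in> S \<and> (Y, A) \<in> T}"
    then show "A \<in> {A. kappa A \<le> c}"
      unfolding S_def T_def kappa_def using pinv_eqI by auto
  qed
  ultimately show ?thesis
    by (simp add: closed_compact_projection)
qed

lemma closed_has_short_dual_vector: "closed {A::real^'n^'r. has_short_dual_vector A i t}"
proof -
  define T :: "((real^'n) \<times> (real^'n^'r)) set"
    where "T = {(w, A). (\<forall>k. k \<noteq> i \<longrightarrow> A $ k \<bullet> w = 0) \<and> A $ i \<bullet> w = 1}"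
  have "closed T"
    unfolding T_def case_prod_beta
    by (intro closed_Collect_conj closed_Collect_all closed_Collect_imp closed_Collect_eq continuous_intros) auto
  then have "closed {A. \<exists>w. w \<in> cball 0 (1 / t) \<and> (w, A) \<in> T}"
    by (rule closed_compact_projection[OF compact_cball])
  also have "{A. \<exists>w. w \<in> cball 0 (1 / t) \<and> (w, A) \<in> T} = {A. has_short_dual_vector A i t}"
    unfolding has_short_dual_vector_def T_def by auto
  finally show ?thesis .
qed

section \<open>Products of Gaussian measures\<close>

abbreviation gaussian_product :: "'i set \<Rightarrow> ('i \<Rightarrow> real) \<Rightarrow> real \<Rightarrow> ('i \<Rightarrow> real) measure" where
  "gaussian_product J \<mu> \<sigma> \<equiv> PiM J (\<lambda>p. density lborel (normal_density (\<mu> p) \<sigma>))"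

lemma product_prob_space_normal_density:
  "\<sigma> > 0 \<Longrightarrow> product_prob_space (\<lambda>p. density lborel (normal_density (\<mu> p) \<sigma>))"
  by (intro product_prob_space.intro product_sigma_finite.intro product_prob_space_axioms.intro
      prob_space_normal_density prob_space_imp_sigma_finite)

lemma prob_space_gaussian_product: "\<sigma> > 0 \<Longrightarrow> prob_space (gaussian_product J \<mu> \<sigma>)"
  by (intro prob_space_PiM prob_space_normal_density)

lemma measurable_gaussian_product_component:
  "p \<in> J \<Longrightarrow> (\<lambda>y. y p) \<in> borel_measurable (gaussian_product J \<mu> \<sigma>)"
  using measurable_component_singleton[of p J "\<lambda>p. density lborel (normal_density (\<mu> p) \<sigma>)"]
  by (simp add: measurable_cong_sets[OF refl sets_density])

lemma distributed_gaussian_product_component: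
  assumes "\<sigma> > 0" and "p \<in> J"
  shows "distributed (gaussian_product J \<mu> \<sigma>) lborel (\<lambda>y. y p) (normal_density (\<mu> p) \<sigma>)"
proof -
  let ?G = "\<lambda>p. density lborel (normal_density (\<mu> p) \<sigma>)"
  have "distr (gaussian_product J \<mu> \<sigma>) lborel (\<lambda>y. y p) = distr (gaussian_product J \<mu> \<sigma>) (?G p) (\<lambda>y. y p)"
    by (rule distr_cong) simp_all
  also have "\<dots> = ?G p"
    using assms by (intro distr_PiM_component prob_space_normal_density)
  finally show ?thesis
    unfolding distributed_def using measurable_component_singleton[OF assms(2), of ?G]
    by (simp add: measurable_cong_sets[OF refl sets_density])
qed

lemma indep_vars_gaussian_product_components:
  assumes "\<sigma> > 0" and "finite J" and "K \<subseteq> J" and "K \<noteq> {}"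
  shows "prob_space.indep_vars (gaussian_product J \<mu> \<sigma>)
           (\<lambda>p. density lborel (normal_density (\<mu> p) \<sigma>)) (\<lambda>p y. y p) K"
proof -
  let ?G = "\<lambda>p. density lborel (normal_density (\<mu> p) \<sigma>)"
  interpret G: product_prob_space ?G
    using assms(1) by (rule product_prob_space_normal_density)
  interpret P: prob_space "gaussian_product J \<mu> \<sigma>"
    using assms(1) by (rule prob_space_gaussian_product)
  have component: "(\<lambda>y. y p) \<in> measurable (gaussian_product J \<mu> \<sigma>) (?G p)" if "p \<in> K" for p
    using assms(3) that by (intro measurable_component_singleton) auto
  show ?thesis
  proof (subst P.indep_vars_iff_distr_eq_PiM'[OF assms(4) component])
    have "distr (gaussian_product J \<mu> \<sigma>) (PiM K ?G) (\<lambda>x. \<lambda>p\<in>K. x p) = PiM K ?G"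
      using G.distr_restrict[OF assms(3,2)] by simp
    also have "\<dots> = PiM K (\<lambda>p. distr (gaussian_product J \<mu> \<sigma>) (?G p) (\<lambda>y. y p))"
      using assms by (intro PiM_cong refl distr_PiM_component[symmetric] prob_space_normal_density) auto
    finally show "distr (gaussian_product J \<mu> \<sigma>) (PiM K ?G) (\<lambda>x. \<lambda>p\<in>K. x p) =
        PiM K (\<lambda>p. distr (gaussian_product J \<mu> \<sigma>) (?G p) (\<lambda>y. y p))" .
  qed simp_all
qed

lemma distributed_gaussian_product_linear_form:
  assumes "\<sigma> > 0" and "finite J" and unit: "(\<Sum>p\<in>J. (c p)\<^sup>2) = 1"
  shows "distributed (gaussian_product J \<mu> \<sigma>) lborel (\<lambda>y. \<Sum>p\<in>J. c p * y p)
           (normal_density (\<Sum>p\<in>J. c p * \<mu> p) \<sigma>)"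
proof -
  let ?G = "\<lambda>p. density lborel (normal_density (\<mu> p) \<sigma>)"
  interpret P: prob_space "gaussian_product J \<mu> \<sigma>"
    using assms(1) by (rule prob_space_gaussian_product)
  define K where "K = {p\<in>J. c p \<noteq> 0}"
  have K: "finite K" "K \<subseteq> J"
    using assms(2) by (auto simp: K_def)
  have sum_K: "(\<Sum>p\<in>J. f p) = (\<Sum>p\<in>K. f p)" if "\<And>p. c p = 0 \<Longrightarrow> f p = 0" for f :: "_ \<Rightarrow> real"
    using that by (intro sum.mono_neutral_right assms(2)) (auto simp: K_def)
  have "(\<Sum>p\<in>K. (c p)\<^sup>2) = 1"
    using unit sum_K[of "\<lambda>p. (c p)\<^sup>2"] by simp
  then have "K \<noteq> {}"
    by auto
  have "P.indep_vars ?G (\<lambda>p y. y p) K"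
    using assms(1,2) K(2) \<open>K \<noteq> {}\<close> by (rule indep_vars_gaussian_product_components)
  then have "P.indep_vars (\<lambda>_. borel) (\<lambda>p y. c p * y p) K"
    by (rule P.indep_vars_compose2) (auto simp: measurable_cong_sets[OF sets_density refl])
  moreover have "distributed (gaussian_product J \<mu> \<sigma>) lborel (\<lambda>y. c p * y p)
      (normal_density (c p * \<mu> p) (\<bar>c p\<bar> * \<sigma>))" if "p \<in> K" for p
    using P.normal_density_affine[OF distributed_gaussian_product_component[OF assms(1)], of p "c p" 0]
      that K assms(1) by (auto simp: K_def)
  ultimately have "distributed (gaussian_product J \<mu> \<sigma>) lborel (\<lambda>y. \<Sum>p\<in>K. c p * y p)
      (normal_density (\<Sum>p\<in>K. c p * \<mu> p) (sqrt (\<Sum>p\<in>K. (\<bar>c p\<bar> * \<sigma>)\<^sup>2)))"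
    using K assms(1) by (intro P.sum_indep_normal \<open>K \<noteq> {}\<close>) (auto simp: K_def)
  moreover have "sqrt (\<Sum>p\<in>K. (\<bar>c p\<bar> * \<sigma>)\<^sup>2) = \<sigma>"
    using \<open>(\<Sum>p\<in>K. (c p)\<^sup>2) = 1\<close> assms(1)
    by (simp add: power_mult_distrib flip: sum_distrib_right)
  ultimately show ?thesis
    by (simp add: sum_K)
qed

lemma normal_density_le: "\<sigma> > 0 \<Longrightarrow> normal_density \<mu> \<sigma> x \<le> 1 / sqrt (2 * pi * \<sigma>\<^sup>2)"
  unfolding normal_density_def by (simp add: divide_right_mono)

lemma emeasure_abs_normal_less:
  assumes X: "distributed M lborel X (normal_density \<mu> \<sigma>)" and "\<sigma> > 0" and "t \<ge> 0"
  shows "emeasure M {x \<in> space M. \<bar>X x\<bar> < t} \<le> ennreal (2 * t / sqrt (2 * pi * \<sigma>\<^sup>2))"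
proof -
  have "{x \<in> space M. \<bar>X x\<bar> < t} = X -` {-t<..<t} \<inter> space M"
    by auto
  then have "emeasure M {x \<in> space M. \<bar>X x\<bar> < t}
      = (\<integral>\<^sup>+z. ennreal (normal_density \<mu> \<sigma> z) * indicator {-t<..<t} z \<partial>lborel)"
    using distributed_emeasure[OF X, of "{-t<..<t}"] by simp
  also have "\<dots> \<le> (\<integral>\<^sup>+z. ennreal (1 / sqrt (2 * pi * \<sigma>\<^sup>2)) * indicator {-t<..<t} z \<partial>lborel)"
    using normal_density_le[OF assms(2)]
    by (intro nn_integral_mono) (auto simp: indicator_def ennreal_leI)
  also have "\<dots> = ennreal (2 * t / sqrt (2 * pi * \<sigma>\<^sup>2))"
    using assms(3) by (simp add: nn_integral_cmult_indicator ennreal_mult'[symmetric])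
  finally show ?thesis .
qed

lemma emeasure_gaussian_product_abs_linear_form_less:
  assumes "\<sigma> > 0" and "finite J" and "(\<Sum>p\<in>J. (c p)\<^sup>2) = 1" and "t \<ge> 0"
  shows "emeasure (gaussian_product J \<mu> \<sigma>) {y \<in> space (gaussian_product J \<mu> \<sigma>). \<bar>\<Sum>p\<in>J. c p * y p\<bar> < t}
           \<le> ennreal (2 * t / sqrt (2 * pi * \<sigma>\<^sup>2))"
  using emeasure_abs_normal_less[OF distributed_gaussian_product_linear_form] assms by blast

lemma nn_integral_normal_second_moment:
  assumes "\<sigma> > 0"
  shows "(\<integral>\<^sup>+z. normal_density \<mu> \<sigma> z * ennreal ((z - \<mu>)\<^sup>2) \<partial>lborel) = ennreal (\<sigma>\<^sup>2)"
proof -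
  have "(\<integral>\<^sup>+z. normal_density \<mu> \<sigma> z * ennreal ((z - \<mu>)\<^sup>2) \<partial>lborel)
      = (\<integral>\<^sup>+z. ennreal (normal_density \<mu> \<sigma> z * (z - \<mu>)\<^sup>2) \<partial>lborel)"
    by (simp add: ennreal_mult')
  also have "\<dots> = ennreal (\<integral>z. normal_density \<mu> \<sigma> z * (z - \<mu>)\<^sup>2 \<partial>lborel)"
    using assms by (intro nn_integral_eq_integral integrable_normal_moment AE_I2) simp_all
  also have "(\<integral>z. normal_density \<mu> \<sigma> z * (z - \<mu>)\<^sup>2 \<partial>lborel) = \<sigma>\<^sup>2"
    using integral_normal_moment_even[of \<sigma> \<mu> 1] assms by simp
  finally show ?thesis .
qed

lemma emeasure_gaussian_product_sq_deviation_greater: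
  fixes \<sigma> c :: real
  assumes "\<sigma> > 0" and "finite J" and "c > 0"
  shows "emeasure (gaussian_product J \<mu> \<sigma>)
           {y \<in> space (gaussian_product J \<mu> \<sigma>). c < (\<Sum>p\<in>J. (y p - \<mu> p)\<^sup>2)}
         \<le> ennreal (real (card J) * \<sigma>\<^sup>2 / c)"
proof -
  let ?M = "gaussian_product J \<mu> \<sigma>"
  note measurable_gaussian_product_component[measurable]
  have second_moment: "(\<integral>\<^sup>+y. ennreal ((y p - \<mu> p)\<^sup>2) \<partial>?M) = ennreal (\<sigma>\<^sup>2)" if "p \<in> J" for p
    using distributed_nn_integral[OF distributed_gaussian_product_component[OF assms(1) that, of \<mu>],
        of "\<lambda>z. ennreal ((z - \<mu> p)\<^sup>2)"] nn_integral_normal_second_moment[OF assms(1), of "\<mu> p"]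
    by simp
  have "emeasure ?M {y \<in> space ?M. c < (\<Sum>p\<in>J. (y p - \<mu> p)\<^sup>2)}
      \<le> (\<integral>\<^sup>+y. ennreal (1 / c) * (\<Sum>p\<in>J. ennreal ((y p - \<mu> p)\<^sup>2)) \<partial>?M)"
  proof (subst nn_integral_indicator[symmetric])
    show "{y \<in> space ?M. c < (\<Sum>p\<in>J. (y p - \<mu> p)\<^sup>2)} \<in> sets ?M"
      using assms(2) by measurable
    show "integral\<^sup>N ?M (indicator {y \<in> space ?M. c < (\<Sum>p\<in>J. (y p - \<mu> p)\<^sup>2)})
        \<le> (\<integral>\<^sup>+y. ennreal (1 / c) * (\<Sum>p\<in>J. ennreal ((y p - \<mu> p)\<^sup>2)) \<partial>?M)"
      using assms(3)
      by (intro nn_integral_mono)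
         (auto simp: indicator_def sum_nonneg ennreal_mult'[symmetric] sum_ennreal field_simps)
  qed
  also have "\<dots> = ennreal (1 / c) * (\<Sum>p\<in>J. \<integral>\<^sup>+y. ennreal ((y p - \<mu> p)\<^sup>2) \<partial>?M)"
  proof -
    have summand: "(\<lambda>y. ennreal ((y p - \<mu> p)\<^sup>2)) \<in> borel_measurable ?M" if "p \<in> J" for p
      using that by measurable
    then have "(\<lambda>y. \<Sum>p\<in>J. ennreal ((y p - \<mu> p)\<^sup>2)) \<in> borel_measurable ?M"
      by (rule borel_measurable_sum)
    then show ?thesis
      by (simp only: nn_integral_cmult nn_integral_sum[OF summand])
  qed
  also have "\<dots> = ennreal (real (card J) * \<sigma>\<^sup>2 / c)"
    using assms(3) by (simp add: second_moment ennreal_mult'[symmetric] ennreal_of_nat_eq_real_of_nat)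
  finally show ?thesis .
qed

lemma sets_gaussian_product_UNIV:
  "sets (gaussian_product (UNIV::'i::finite set) \<mu> \<sigma>) = sets borel"
proof -
  have "sets (gaussian_product (UNIV::'i set) \<mu> \<sigma>) = sets (PiM UNIV (\<lambda>_::'i. borel::real measure))"
    by (intro sets_PiM_cong) auto
  also have "\<dots> = sets borel"
    by (rule sets_PiM_equal_borel)
  finally show ?thesis .
qed

lemma sets_gaussian_product_mat_of_entries:
  fixes \<mu> :: "'r::finite \<times> 'n::finite \<Rightarrow> real"
  assumes "closed K"
  shows "{X \<in> space (gaussian_product UNIV \<mu> \<sigma>). mat_of_entries X \<in> K} \<in> sets (gaussian_product UNIV \<mu> \<sigma>)"
proof -
  have "continuous_on UNIV (mat_of_entries :: ('r \<times> 'n \<Rightarrow> real) \<Rightarrow> real^'n^'r)"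
    unfolding mat_of_entries_def by (intro continuous_intros continuous_on_product_coordinates)
  then have "mat_of_entries \<in> borel_measurable (gaussian_product UNIV \<mu> \<sigma>)"
    unfolding measurable_cong_sets[OF sets_gaussian_product_UNIV refl]
    by (rule borel_measurable_continuous_onI)
  from measurable_sets[OF this borel_closed[OF assms]] show ?thesis
    by (simp add: Int_def conj_commute)
qed

section \<open>Gaussian rows have short dual vectors\<close>

lemma exists_unit_vector_orthogonal:
  fixes V :: "(real^'n) set"
  assumes "finite V" and "card V < CARD('n)"
  obtains v where "norm v = 1" and "\<And>x. x \<in> V \<Longrightarrow> x \<bullet> v = 0"
proof -
  have "dim V < DIM(real^'n)"
    using dim_le_card[OF span_superset assms(1)] assms(2) by simp
  then obtain v where "v \<noteq> 0" "\<And>x. x \<in> span V \<Longrightarrow> orthogonal v x"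
    using orthogonal_to_subspace_exists by blast
  then show ?thesis
    by (intro that[of "v /\<^sub>R norm v"]) (auto simp: orthogonal_def inner_commute span_base)
qed

lemma exists_unit_vector_orthogonal_rows:
  fixes A :: "real^'n^'r"
  assumes "CARD('r) \<le> CARD('n)"
  obtains v where "norm v = 1" and "\<And>k. k \<noteq> i \<Longrightarrow> A $ k \<bullet> v = 0"
proof -
  have "finite ((\<lambda>k. A $ k) ` (- {i}))"
    by simp
  moreover have "card ((\<lambda>k. A $ k) ` (- {i})) < CARD('n)"
  proof -
    have "card ((\<lambda>k. A $ k) ` (- {i})) \<le> card (- {i})"
      by (rule card_image_le) simp
    also have "\<dots> < CARD('r)"
      by (simp add: Compl_eq_Diff_UNIV card_Diff_subset)
    finally show ?thesis
      using assms by linarith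
  qed
  ultimately obtain v where "norm v = 1" "\<And>x. x \<in> (\<lambda>k. A $ k) ` (- {i}) \<Longrightarrow> x \<bullet> v = 0"
    by (rule exists_unit_vector_orthogonal) blast
  then show ?thesis
    by (intro that[of v]) auto
qed

lemma sum_singleton_Times: "(\<Sum>p\<in>{i} \<times> B. f p) = (\<Sum>j\<in>B. f (i, j))"
proof -
  have "(\<Sum>p\<in>{i} \<times> B. f p) = (\<Sum>x\<in>{i}. \<Sum>j\<in>B. f (x, j))"
    unfolding sum.cartesian_product by simp
  then show ?thesis
    by simp
qed

lemma emeasure_row_not_short_dual_vector:
  fixes A :: "real^'n::finite^'r::finite" and \<mu> :: "'r \<times> 'n \<Rightarrow> real" and i :: 'r
  assumes "CARD('r) \<le> CARD('n)" and "\<sigma> > 0" and "t > 0"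
  defines "M \<equiv> gaussian_product ({i} \<times> UNIV) \<mu> \<sigma>"
  shows "emeasure M {y \<in> space M. \<not> has_short_dual_vector (\<chi> k. if k = i then (\<chi> j. y (i, j)) else A $ k) i t}
           \<le> ennreal (2 * t / sqrt (2 * pi * \<sigma>\<^sup>2))"
proof -
  note measurable_gaussian_product_component[measurable]
  obtain v where v: "norm v = 1" "\<And>k. k \<noteq> i \<Longrightarrow> A $ k \<bullet> v = 0"
    using assms(1) by (rule exists_unit_vector_orthogonal_rows) blast
  define c where "c p = v $ snd p" for p :: "'r \<times> 'n"
  define R where "R = {y \<in> space M. \<not> has_short_dual_vector (\<chi> k. if k = i then (\<chi> j. y (i, j)) else A $ k) i t}"
  define S where "S = {y \<in> space M. \<bar>\<Sum>p\<in>{i} \<times> UNIV. c p * y p\<bar> < t}"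
  have "R \<subseteq> S"
  proof
    fix y assume "y \<in> R"
    let ?A = "\<chi> k. if k = i then (\<chi> j. y (i, j)) else A $ k"
    have "?A $ k \<bullet> v = 0" if "k \<noteq> i" for k
      using that v(2) by simp
    moreover have "?A $ i \<bullet> v = (\<Sum>p\<in>{i} \<times> UNIV. c p * y p)"
      by (simp add: sum_singleton_Times c_def inner_vec_def mult.commute)
    ultimately have "\<not> t \<le> \<bar>\<Sum>p\<in>{i} \<times> UNIV. c p * y p\<bar>"
      using has_short_dual_vectorI[OF v(1) _ assms(3), where A = ?A and i = i] \<open>y \<in> R\<close> unfolding R_def by auto
    then show "y \<in> S"
      using \<open>y \<in> R\<close> unfolding R_def S_def by auto
  qed
  moreover have "S \<in> sets M"
    unfolding S_def M_def by measurable
  moreover have "(\<Sum>p\<in>{i} \<times> UNIV. (c p)\<^sup>2) = 1"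
    using v(1) by (simp add: sum_singleton_Times c_def norm_eq_1 inner_vec_def power2_eq_square)
  then have "emeasure M S \<le> ennreal (2 * t / sqrt (2 * pi * \<sigma>\<^sup>2))"
    unfolding S_def M_def using assms(2,3) by (intro emeasure_gaussian_product_abs_linear_form_less) auto
  ultimately show ?thesis
    unfolding R_def[symmetric] using emeasure_mono order_trans by blast
qed

lemma emeasure_not_short_dual_vector:
  fixes \<mu> :: "'r::finite \<times> 'n::finite \<Rightarrow> real"
  assumes "CARD('r) \<le> CARD('n)" and "\<sigma> > 0" and "t > 0"
  defines "M \<equiv> gaussian_product UNIV \<mu> \<sigma>"
  shows "emeasure M {X \<in> space M. \<not> has_short_dual_vector (mat_of_entries X) i t}
           \<le> ennreal (2 * t / sqrt (2 * pi * \<sigma>\<^sup>2))"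
proof -
  let ?G = "\<lambda>p. density lborel (normal_density (\<mu> p) \<sigma>)"
  define I J where "I = (- {i}) \<times> (UNIV :: 'n set)" and "J = {i} \<times> (UNIV :: 'n set)"
  have IJ: "I \<inter> J = {}" "I \<union> J = UNIV"
    unfolding I_def J_def by auto
  interpret G: product_prob_space ?G
    using assms(2) by (rule product_prob_space_normal_density)
  interpret PI: prob_space "PiM I ?G"
    using assms(2) by (rule prob_space_gaussian_product)
  define B where "B = {X \<in> space M. \<not> has_short_dual_vector (mat_of_entries X) i t}"
  have "{X \<in> space M. has_short_dual_vector (mat_of_entries X) i t} \<in> sets M"
    using sets_gaussian_product_mat_of_entries[OF closed_has_short_dual_vector] unfolding M_def by simp
  moreover have "B = space M - {X \<in> space M. has_short_dual_vector (mat_of_entries X) i t}"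
    unfolding B_def by blast
  ultimately have "B \<in> sets M"
    by simp
  have slice: "(\<lambda>y. merge I J (x, y)) -` B \<inter> space (PiM J ?G) =
      {y \<in> space (PiM J ?G). \<not> has_short_dual_vector
         (\<chi> k. if k = i then (\<chi> j. y (i, j)) else mat_of_entries x $ k) i t}" for x
  proof -
    have "mat_of_entries (merge I J (x, y)) = (\<chi> k. if k = i then (\<chi> j. y (i, j)) else mat_of_entries x $ k)" for y
      using IJ by (simp add: mat_of_entries_def vec_eq_iff I_def J_def)
    then show ?thesis
      by (auto simp: B_def M_def space_PiM)
  qed
  have "emeasure M B = emeasure (PiM (I \<union> J) ?G) B"
    unfolding M_def IJ(2) ..
  also have "\<dots> = (\<integral>\<^sup>+x. emeasure (PiM J ?G) ((\<lambda>y. merge I J (x, y)) -` B \<inter> space (PiM J ?G)) \<partial>PiM I ?G)"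
    using \<open>B \<in> sets M\<close> IJ by (intro G.emeasure_fold_integral) (auto simp: M_def)
  also have "\<dots> \<le> (\<integral>\<^sup>+x. ennreal (2 * t / sqrt (2 * pi * \<sigma>\<^sup>2)) \<partial>PiM I ?G)"
  proof (rule nn_integral_mono)
    fix x
    show "emeasure (PiM J ?G) ((\<lambda>y. merge I J (x, y)) -` B \<inter> space (PiM J ?G))
        \<le> ennreal (2 * t / sqrt (2 * pi * \<sigma>\<^sup>2))"
      unfolding slice unfolding J_def by (rule emeasure_row_not_short_dual_vector[OF assms(1-3)])
  qed
  also have "\<dots> = ennreal (2 * t / sqrt (2 * pi * \<sigma>\<^sup>2))"
    using PI.emeasure_space_1 by simp
  finally show ?thesis
    unfolding B_def .
qed

section \<open>The probability bound\<close>

lemma (in finite_measure) measure_le_if_emeasure_le: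
  "emeasure M A \<le> ennreal b \<Longrightarrow> 0 \<le> b \<Longrightarrow> measure M A \<le> b"
  by (simp add: emeasure_eq_measure)

lemma (in prob_space) prob_ge_union_bound:
  assumes "finite I" and "A \<in> events" and "\<And>i. i \<in> I \<Longrightarrow> B i \<in> events" and "G \<in> events"
    and "A \<inter> (\<Inter>i\<in>I. B i) \<subseteq> G"
  shows "1 - ((1 - prob A) + (\<Sum>i\<in>I. 1 - prob (B i))) \<le> prob G"
proof -
  have A': "space M - A \<in> events"
    using assms(2) by (rule sets.compl_sets)
  have B': "(\<Union>i\<in>I. space M - B i) \<in> events"
    using assms(1,3) by (intro sets.finite_UN sets.compl_sets)
  have "space M - G \<subseteq> (space M - A) \<union> (\<Union>i\<in>I. space M - B i)"
    using assms(5) by blast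
  then have "prob (space M - G) \<le> prob ((space M - A) \<union> (\<Union>i\<in>I. space M - B i))"
    using sets.Un[OF A' B'] by (rule finite_measure_mono)
  also have "\<dots> \<le> prob (space M - A) + prob (\<Union>i\<in>I. space M - B i)"
    using A' B' by (rule measure_Un_le)
  also have "\<dots> \<le> prob (space M - A) + (\<Sum>i\<in>I. prob (space M - B i))"
    using assms(1,3) by (intro add_left_mono measure_UNION_le) auto
  also have "(\<Sum>i\<in>I. prob (space M - B i)) = (\<Sum>i\<in>I. 1 - prob (B i))"
    using assms(3) by (intro sum.cong refl prob_compl)
  finally show ?thesis
    using prob_compl[OF assms(2)] prob_compl[OF assms(4)] by linarith
qed

lemma gauss_matrix_measure_eq:
  "gauss_matrix_measure U' \<sigma> = gaussian_product UNIV (\<lambda>(i, j). U' $ i $ j) \<sigma>"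
  unfolding gauss_matrix_measure_def by (intro PiM_cong) (auto simp: split_beta)

lemma prob_space_gauss_matrix_measure: "\<sigma> > 0 \<Longrightarrow> prob_space (gauss_matrix_measure U' \<sigma>)"
  unfolding gauss_matrix_measure_eq by (rule prob_space_gaussian_product)

lemma sets_gauss_matrix_measure_closed:
  fixes U' :: "real^'n::finite^'r::finite"
  assumes "closed {A. P A}"
  shows "{X \<in> space (gauss_matrix_measure U' \<sigma>). P (mat_of_entries X)} \<in> sets (gauss_matrix_measure U' \<sigma>)"
  using sets_gaussian_product_mat_of_entries[OF assms] unfolding gauss_matrix_measure_eq by simp

lemma prob_frob_sq_deviation_le:
  fixes U' :: "real^'n::finite^'r::finite" and \<sigma> c :: real
  assumes "\<sigma> > 0" and "c > 0"
  defines "M \<equiv> gauss_matrix_measure U' \<sigma>"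
  shows "1 - real CARD('r) * real CARD('n) * \<sigma>\<^sup>2 / c \<le> measure M {X \<in> space M. frob_sq (mat_of_entries X - U') \<le> c}"
proof -
  interpret prob_space M
    unfolding M_def using assms(1) by (rule prob_space_gauss_matrix_measure)
  define \<mu> where "\<mu> = (\<lambda>(i, j). U' $ i $ j :: real)"
  have frob: "frob_sq (mat_of_entries X - U') = (\<Sum>p\<in>UNIV. (X p - \<mu> p)\<^sup>2)" for X
    unfolding frob_sq_def mat_of_entries_def \<mu>_def
    by (simp add: sum.cartesian_product split_beta flip: UNIV_Times_UNIV)
  have compl: "space M - {X \<in> space M. frob_sq (mat_of_entries X - U') \<le> c}
      = {X \<in> space M. c < frob_sq (mat_of_entries X - U')}"
    by auto
  have "emeasure M (space M - {X \<in> space M. frob_sq (mat_of_entries X - U') \<le> c})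
      \<le> ennreal (real CARD('r) * real CARD('n) * \<sigma>\<^sup>2 / c)"
    unfolding compl unfolding M_def gauss_matrix_measure_eq frob \<mu>_def[symmetric]
    using emeasure_gaussian_product_sq_deviation_greater[OF assms(1) _ assms(2), where J = "UNIV :: ('r \<times> 'n) set" and \<mu> = \<mu>]
    by simp
  then have "prob (space M - {X \<in> space M. frob_sq (mat_of_entries X - U') \<le> c})
      \<le> real CARD('r) * real CARD('n) * \<sigma>\<^sup>2 / c"
    using assms(2) by (intro measure_le_if_emeasure_le) auto
  moreover have good: "{X \<in> space M. frob_sq (mat_of_entries X - U') \<le> c} \<in> events"
    unfolding M_def by (rule sets_gauss_matrix_measure_closed[OF closed_frob_sq_dist_le])
  ultimately show ?thesis
    using prob_compl[OF good] by linarith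
qed

lemma prob_has_short_dual_vector:
  fixes U' :: "real^'n::finite^'r::finite"
  assumes "CARD('r) \<le> CARD('n)" and "\<sigma> > 0" and "t > 0"
  defines "M \<equiv> gauss_matrix_measure U' \<sigma>"
  shows "1 - 2 * t / sqrt (2 * pi * \<sigma>\<^sup>2) \<le> measure M {X \<in> space M. has_short_dual_vector (mat_of_entries X) i t}"
proof -
  interpret prob_space M
    unfolding M_def using assms(2) by (rule prob_space_gauss_matrix_measure)
  have "emeasure M {X \<in> space M. \<not> has_short_dual_vector (mat_of_entries X) i t}
      \<le> ennreal (2 * t / sqrt (2 * pi * \<sigma>\<^sup>2))"
    unfolding M_def gauss_matrix_measure_eq by (rule emeasure_not_short_dual_vector[OF assms(1-3)])
  moreover have "space M - {X \<in> space M. has_short_dual_vector (mat_of_entries X) i t}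
      = {X \<in> space M. \<not> has_short_dual_vector (mat_of_entries X) i t}"
    by auto
  ultimately have "prob (space M - {X \<in> space M. has_short_dual_vector (mat_of_entries X) i t})
      \<le> 2 * t / sqrt (2 * pi * \<sigma>\<^sup>2)"
    using assms(3) by (intro measure_le_if_emeasure_le) auto
  moreover have good: "{X \<in> space M. has_short_dual_vector (mat_of_entries X) i t} \<in> events"
    unfolding M_def by (rule sets_gauss_matrix_measure_closed[OF closed_has_short_dual_vector])
  ultimately show ?thesis
    using prob_compl[OF good] by linarith
qed

lemma prob_kappa_le:
  fixes U' :: "real^'n::finite^'r::finite"
  assumes "CARD('r) \<le> CARD('n)" and "\<sigma> > 0" and "D > 0" and "t > 0"
  defines "M \<equiv> gauss_matrix_measure U' \<sigma>"
  shows "1 - (real CARD('r) * real CARD('n) * \<sigma>\<^sup>2 / D + real CARD('r) * (2 * t / sqrt (2 * pi * \<sigma>\<^sup>2)))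
           \<le> measure M {X \<in> space M. kappa (mat_of_entries X) \<le> 2 * D + 2 * frob_sq U' + CARD('r) / t\<^sup>2}"
proof -
  interpret prob_space M
    unfolding M_def using assms(2) by (rule prob_space_gauss_matrix_measure)
  let ?near = "{X \<in> space M. frob_sq (mat_of_entries X - U') \<le> D}"
  let ?short = "\<lambda>i. {X \<in> space M. has_short_dual_vector (mat_of_entries X) i t}"
  let ?good = "{X \<in> space M. kappa (mat_of_entries X) \<le> 2 * D + 2 * frob_sq U' + CARD('r) / t\<^sup>2}"
  have near: "?near \<in> events"
    unfolding M_def by (rule sets_gauss_matrix_measure_closed[OF closed_frob_sq_dist_le])
  have short: "?short i \<in> events" for i
    unfolding M_def by (rule sets_gauss_matrix_measure_closed[OF closed_has_short_dual_vector])
  have good: "?good \<in> events"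
    unfolding M_def by (rule sets_gauss_matrix_measure_closed[OF closed_kappa_le])
  have "?near \<inter> (\<Inter>i. ?short i) \<subseteq> ?good"
  proof
    fix X assume X: "X \<in> ?near \<inter> (\<Inter>i. ?short i)"
    then have "kappa (mat_of_entries X) \<le> 2 * D + 2 * frob_sq U' + CARD('r) / t\<^sup>2"
      by (intro kappa_le_if_short_dual_vectors) auto
    with X show "X \<in> ?good"
      by blast
  qed
  then have union: "1 - ((1 - prob ?near) + (\<Sum>i\<in>UNIV. 1 - prob (?short i))) \<le> prob ?good"
    by (rule prob_ge_union_bound[OF finite_class.finite_UNIV near short good])
  have near_bound: "1 - prob ?near \<le> real CARD('r) * real CARD('n) * \<sigma>\<^sup>2 / D"
    using prob_frob_sq_deviation_le[OF assms(2,3), of U'] unfolding M_def by linarith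
  have "1 - prob (?short i) \<le> 2 * t / sqrt (2 * pi * \<sigma>\<^sup>2)" for i
    using prob_has_short_dual_vector[OF assms(1,2,4), of U' i] unfolding M_def by linarith
  then have "(\<Sum>i\<in>UNIV. 1 - prob (?short i)) \<le> (\<Sum>i\<in>(UNIV::'r set). 2 * t / sqrt (2 * pi * \<sigma>\<^sup>2))"
    by (rule sum_mono)
  also have "\<dots> = real CARD('r) * (2 * t / sqrt (2 * pi * \<sigma>\<^sup>2))"
    by simp
  finally show ?thesis
    using union near_bound by linarith
qed

lemma smoothed_failure_probability_le:
  fixes n r \<sigma> :: real
  assumes "1 \<le> n" and "0 \<le> r" and "r \<le> n" and "\<sigma> > 0"
  defines "t \<equiv> \<sigma> / (exp 1 * n * sqrt n)"
  shows "r * n * \<sigma>\<^sup>2 / (49 * \<sigma>\<^sup>2 * n ^ 3) + r * (2 * t / sqrt (2 * pi * \<sigma>\<^sup>2)) \<le> 1 / sqrt n"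
proof -
  have sqrt_n: "1 \<le> sqrt n" "sqrt n \<le> n"
    using assms(1) mult_left_mono[of 1 "sqrt n" "sqrt n"] by auto
  have "r * n * \<sigma>\<^sup>2 / (49 * \<sigma>\<^sup>2 * n ^ 3) = r / (49 * n\<^sup>2)"
    using assms by (simp add: power2_eq_square power3_eq_cube)
  also have "\<dots> \<le> n / (49 * n\<^sup>2)"
    using assms by (intro divide_right_mono) auto
  also have "\<dots> = 1 / (49 * n)"
    using assms(1) by (simp add: power2_eq_square)
  also have "\<dots> \<le> 1 / (2 * sqrt n)"
    using sqrt_n by (intro divide_left_mono) auto
  finally have first: "r * n * \<sigma>\<^sup>2 / (49 * \<sigma>\<^sup>2 * n ^ 3) \<le> 1 / (2 * sqrt n)" .
  have "2 * \<sigma> \<le> sqrt (2 * pi * \<sigma>\<^sup>2)"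
    using assms(4) pi_gt3 by (intro real_le_rsqrt) (simp add: power2_eq_square)
  then have "r * (2 * t / sqrt (2 * pi * \<sigma>\<^sup>2)) \<le> n * (2 * t / (2 * \<sigma>))"
    using assms by (intro mult_mono divide_left_mono) (auto simp: t_def)
  also have "\<dots> = 1 / (exp 1 * sqrt n)"
    using assms(1,4) by (simp add: t_def)
  also have "\<dots> \<le> 1 / (2 * sqrt n)"
    using sqrt_n exp_ge_add_one_self[of 1] by (intro divide_left_mono mult_right_mono) auto
  finally show ?thesis
    using first by linarith
qed

lemma smoothed_threshold_inverse_sq_le:
  fixes n r \<sigma> :: real
  assumes "1 \<le> n" and "0 \<le> r" and "r \<le> n" and "\<sigma> > 0"
  defines "t \<equiv> \<sigma> / (exp 1 * n * sqrt n)"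
  shows "r / t\<^sup>2 \<le> exp 2 * n ^ 4 / \<sigma>\<^sup>2"
proof -
  have "r / t\<^sup>2 = r * exp 2 * n ^ 3 / \<sigma>\<^sup>2"
    using assms by (simp add: t_def power_divide power_mult_distrib power2_eq_square power3_eq_cube
        field_simps flip: exp_add)
  also have "\<dots> \<le> exp 2 * n ^ 4 / \<sigma>\<^sup>2"
    using assms by (intro divide_right_mono) (auto simp: power_numeral_reduce)
  finally show ?thesis .
qed

theorem theorem6p6:
  fixes U' :: "real^'n::finite^'r::finite" and \<sigma> :: real
  assumes "CARD('r) \<le> CARD('n)" and "\<sigma> > 0"
  shows "measure (gauss_matrix_measure U' \<sigma>)
           {X \<in> space (gauss_matrix_measure U' \<sigma>).
              kappa (mat_of_entries X)
                \<le> 98 * \<sigma>\<^sup>2 * real CARD('n) ^ 3 + 2 * real CARD('n) * frob_sq U'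
                   + exp 2 * real CARD('n) ^ 4 / \<sigma>\<^sup>2}
         \<ge> 1 - (1 / sqrt (real CARD('n)) + exp (- 2 * real CARD('n) / pi\<^sup>2))"
proof -
  define n r where "n = real CARD('n)" and "r = real CARD('r)"
  define t where "t = \<sigma> / (exp 1 * n * sqrt n)"
  let ?M = "gauss_matrix_measure U' \<sigma>"
  let ?kappa_le = "\<lambda>b. {X \<in> space ?M. kappa (mat_of_entries X) \<le> b}"
  interpret prob_space ?M
    using assms(2) by (rule prob_space_gauss_matrix_measure)
  have n: "1 \<le> n" "0 \<le> r" "r \<le> n" and t: "t > 0"
    using assms by (auto simp: n_def r_def t_def Suc_le_eq)
  have "2 * (49 * \<sigma>\<^sup>2 * n ^ 3) + 2 * frob_sq U' + r / t\<^sup>2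
      \<le> 98 * \<sigma>\<^sup>2 * n ^ 3 + 2 * n * frob_sq U' + exp 2 * n ^ 4 / \<sigma>\<^sup>2"
    using smoothed_threshold_inverse_sq_le[OF n assms(2)] frob_sq_nonneg[of U']
      mult_right_mono[of 1 n "frob_sq U'"] n unfolding t_def by linarith
  then have "prob (?kappa_le (2 * (49 * \<sigma>\<^sup>2 * n ^ 3) + 2 * frob_sq U' + r / t\<^sup>2))
      \<le> prob (?kappa_le (98 * \<sigma>\<^sup>2 * n ^ 3 + 2 * n * frob_sq U' + exp 2 * n ^ 4 / \<sigma>\<^sup>2))"
    by (intro finite_measure_mono[OF _ sets_gauss_matrix_measure_closed[OF closed_kappa_le]]) auto
  moreover have "1 - (r * n * \<sigma>\<^sup>2 / (49 * \<sigma>\<^sup>2 * n ^ 3) + r * (2 * t / sqrt (2 * pi * \<sigma>\<^sup>2)))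
      \<le> prob (?kappa_le (2 * (49 * \<sigma>\<^sup>2 * n ^ 3) + 2 * frob_sq U' + r / t\<^sup>2))"
    unfolding n_def r_def using n assms(2) by (intro prob_kappa_le[OF assms(1,2) _ t]) (simp add: n_def)
  moreover have "r * n * \<sigma>\<^sup>2 / (49 * \<sigma>\<^sup>2 * n ^ 3) + r * (2 * t / sqrt (2 * pi * \<sigma>\<^sup>2)) \<le> 1 / sqrt n"
    unfolding t_def by (rule smoothed_failure_probability_le[OF n assms(2)])
  moreover have "0 \<le> exp (- 2 * n / pi\<^sup>2)"
    by simp
  ultimately show ?thesis
    unfolding n_def[symmetric] by linarith
qed

end
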